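(* Let $1\leqslant\xi<\omega_1$, let $(x_k)_k$ be a bounded block sequence in $\mathfrak{X}_{0,1}^{\omega^\xi}$, and let $(y_k)_k$ be a block sequence of $(x_k)_k$ such that each $y_k=\sum_{i\in F_k}c_ix_i$ is a $(\xi_{k+1},\xi_k,\varepsilon_k)$ special convex combination, where $\lim_k\varepsilon_k=0$. Then $\alpha_{<\omega^\xi}((y_j)_j)=0$.
   Context: Schreier families: $\mathcal{S}_0=\{\varnothing\}\cup\{\{n\}\}$, $\mathcal{S}_1=\{E:|E|\leqslant\min E\}$, $\mathcal{S}_{\zeta+1}=\{\bigcup_{i=1}^nE_i:E_1<\dots<E_n,E_i\in\mathcal{S}_\zeta,n\leqslant\min E_1\}$, and for a countable limit ordinal $\zeta$ a sequence $\zeta_n\uparrow\zeta$ is fixed with $\mathcal{S}_{\zeta_n}\subset\mathcal{S}_{\zeta_{n+1}}$, $\mathcal{S}_\zeta=\{E:\exists n,\ n\leqslant\min E,\ E\in\mathcal{S}_{\zeta_n}\}$; $(\xi_n)$ denotes the sequence with $\xi_n\uparrow\omega^\xi$ used for $\mathcal{S}_{\omega^\xi}$. The space: for $G\subset c_{00}$, $\alpha=\frac1\ell\sum_{q=1}^df_q$ with $f_1<\dots<f_d\in G$ (successive supports), $d\leqslant\ell$, $\ell\geqslant2$, is an $\alpha$-average of size $s(\alpha)=\ell$. A sequence $\alpha_1<\dots<\alpha_d$ of $\alpha$-averages is $\mathcal{F}$-admissible if $\{\min\mathrm{supp}\,\alpha_q\}_q\in\mathcal{F}$; a sequence $\alpha_1<\alpha_2<\cdots$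 is very fast growing if $s(\alpha_1)<s(\alpha_2)<\cdots$ and $s(\alpha_q)>\max\mathrm{supp}\,\alpha_{q-1}$ for $q>1$. $W_0=\{\pm e_n\}$, $W_{m+1}=W_m\cup\{\frac1\ell\sum_{q=1}^df_q:f_1<\dots<f_d\in W_m,2\leqslant\ell,d\leqslant\ell\}\cup\{\sum_{q=1}^d\alpha_q:(\alpha_q)\subset W_m$ $\mathcal{S}_{\omega^\xi}$-admissible, very fast growing $\alpha$-averages$\}$, $W=\bigcup_mW_m$; $\|x\|=\sup_{f\in W}\sum_if(i)x(i)$, and $\mathfrak{X}_{0,1}^{\omega^\xi}$ is the completion of $c_{00}$ under this norm. Index: for a block sequence $(x_k)$, $\alpha_{<\omega^\xi}((x_k))=0$ if for every $n$, every very fast growing sequence $(\alpha_q)_{q\in\mathbb{N}}$ of $\alpha$-averages in $W$, every sequence $F_1<F_2<\cdots$ of finite sets with $(\alpha_q)_{q\in F_k}$ $\mathcal{S}_{\xi_n}$-admissible for each $k$, and every subsequence $(x_{n_k})$, $\lim_k\sum_{q\in F_k}|\alpha_q(x_{n_k})|=0$. Special convex combinations: for ordinals $\zeta<\eta$ and $\varepsilon>0$, $\sum_{i\in F}c_ie_i$ is a $(\eta,\zeta,\varepsilon)$ basic s.c.c. if $c_i\geqslant0$, $\sum_{i\in F}c_i=1$, $F\in\mathcal{S}_\eta$, and $\sum_{i\in G\cap F}c_i<\varepsilon$ for every $G\in\mathcal{S}_\zeta$. For a block sequence $(x_k)_{k=1}^m$ and $c_k\geqslant0$, with $\phi_k=\min\mathrm{supp}\,x_k$,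 the vector $\sum_kc_kx_k$ is a $(\eta,\zeta,\varepsilon)$ special convex combination if $\sum_kc_ke_{\phi_k}$ is a $(\eta,\zeta,\varepsilon)$ basic s.c.c. *)

theory Defs
  imports Complex_Main
begin

text \<open>A tree OL f denotes the supremum of the ordinals denoted by f 0, f 1, ...;
  the sequence f is the fixed sequence (paper: zeta_1, zeta_2, ...) used in the
  definition of the Schreier family of a limit ordinal.\<close>

datatype ord = OZ | OS ord | OL "nat \<Rightarrow> ord"

inductive ole :: "ord \<Rightarrow> ord \<Rightarrow> bool" and olt :: "ord \<Rightarrow> ord \<Rightarrow> bool" where
  ole_zero: "ole OZ y"
| ole_succ: "olt x y \<Longrightarrow> ole (OS x) y"
| ole_lim: "(\<And>n. ole (f n) y) \<Longrightarrow> ole (OL f) y"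
| olt_succ: "ole x y \<Longrightarrow> olt x (OS y)"
| olt_lim: "olt x (g n) \<Longrightarrow> olt x (OL g)"

definition oeq :: "ord \<Rightarrow> ord \<Rightarrow> bool" where
  "oeq a b \<longleftrightarrow> ole a b \<and> ole b a"

primrec oadd :: "ord \<Rightarrow> ord \<Rightarrow> ord" where
  "oadd a OZ = a"
| "oadd a (OS b) = OS (oadd a b)"
| "oadd a (OL g) = OL (\<lambda>n. oadd a (g n))"

primrec omul_nat :: "ord \<Rightarrow> nat \<Rightarrow> ord" where
  "omul_nat a 0 = OZ"
| "omul_nat a (Suc n) = oadd (omul_nat a n) a"

text \<open>oexpw b denotes omega to the power b.\<close>
primrec oexpw :: "ord \<Rightarrow> ord" where
  "oexpw OZ = OS OZ"
| "oexpw (OS b) = OL (\<lambda>n. omul_nat (oexpw b) n)"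
| "oexpw (OL g) = OL (\<lambda>n. oexpw (g n))"

definition setless :: "nat set \<Rightarrow> nat set \<Rightarrow> bool" where
  "setless A B \<longleftrightarrow> (\<forall>a\<in>A. \<forall>b\<in>B. a < b)"

primrec schreier :: "ord \<Rightarrow> nat set set" where
  "schreier OZ = {E. E = {} \<or> (\<exists>n\<ge>1. E = {n})}"
| "schreier (OS z) = {E. E = {} \<or> (\<exists>Es. Es \<noteq> [] \<and> E = \<Union>(set Es)
      \<and> (\<forall>e\<in>set Es. e \<in> schreier z \<and> e \<noteq> {})
      \<and> sorted_wrt setless Es \<and> length Es \<le> Min (hd Es))}"
| "schreier (OL f) = {E. \<exists>n. E \<in> schreier (f n) \<and> (E = {} \<or> Suc n \<le> Min E)}"

primrec valid :: "ord \<Rightarrow> bool" where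
  "valid OZ = True"
| "valid (OS z) = valid z"
| "valid (OL f) = ((\<forall>n. valid (f n)) \<and> (\<forall>n. olt (f n) (f (Suc n)))
      \<and> (\<forall>n. schreier (f n) \<subseteq> schreier (f (Suc n))))"

text \<open>Vectors of c00 are functions nat => real; coordinates are indexed by positive naturals.\<close>

definition supp :: "(nat \<Rightarrow> real) \<Rightarrow> nat set" where
  "supp f = {i. f i \<noteq> 0}"

definition blk :: "(nat \<Rightarrow> real) \<Rightarrow> (nat \<Rightarrow> real) \<Rightarrow> bool" where
  "blk f g \<longleftrightarrow> setless (supp f) (supp g)"

definition avg_ok :: "(nat \<Rightarrow> real) list \<Rightarrow> nat \<Rightarrow> bool" where
  "avg_ok fs l \<longleftrightarrow> fs \<noteq> [] \<and> sorted_wrt blk fs \<and> 2 \<le> l \<and> length fs \<le> l"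

definition avgvec :: "(nat \<Rightarrow> real) list \<Rightarrow> nat \<Rightarrow> (nat \<Rightarrow> real)" where
  "avgvec fs l = (\<lambda>i. (\<Sum>f\<leftarrow>fs. f i) / real l)"

text \<open>Norming set W; SF is the family S_{omega^xi}.\<close>
inductive_set Wset :: "nat set set \<Rightarrow> (nat \<Rightarrow> real) set" for SF where
  unit: "1 \<le> n \<Longrightarrow> s = 1 \<or> s = -1 \<Longrightarrow> (\<lambda>i. if i = n then s else 0) \<in> Wset SF"
| average: "avg_ok fs l \<Longrightarrow> \<forall>f\<in>set fs. f \<in> Wset SF \<Longrightarrow> avgvec fs l \<in> Wset SF"
| vfgsum: "ps \<noteq> [] \<Longrightarrow>
     \<forall>p\<in>set ps. avg_ok (fst p) (snd p) \<and> (\<forall>f\<in>set (fst p). f \<in> Wset SF) \<Longrightarrow>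
     sorted_wrt blk (map (\<lambda>p. avgvec (fst p) (snd p)) ps) \<Longrightarrow>
     set (map (\<lambda>p. Min (supp (avgvec (fst p) (snd p)))) ps) \<in> SF \<Longrightarrow>
     \<forall>q. Suc q < length ps \<longrightarrow> snd (ps ! q) < snd (ps ! Suc q)
          \<and> Max (supp (avgvec (fst (ps ! q)) (snd (ps ! q)))) < snd (ps ! Suc q) \<Longrightarrow>
     (\<lambda>i. \<Sum>p\<leftarrow>ps. avgvec (fst p) (snd p) i) \<in> Wset SF"

definition pair :: "(nat \<Rightarrow> real) \<Rightarrow> (nat \<Rightarrow> real) \<Rightarrow> real" where
  "pair f x = (\<Sum>i\<in>supp x. f i * x i)"

definition xnorm :: "(nat \<Rightarrow> real) set \<Rightarrow> (nat \<Rightarrow> real) \<Rightarrow> real" where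
  "xnorm W x = Sup ((\<lambda>f. pair f x) ` W)"

definition blockseq :: "(nat \<Rightarrow> nat \<Rightarrow> real) \<Rightarrow> bool" where
  "blockseq x \<longleftrightarrow> (\<forall>k. finite (supp (x k)) \<and> supp (x k) \<noteq> {} \<and> 0 \<notin> supp (x k)
      \<and> setless (supp (x k)) (supp (x (Suc k))))"

definition avg_in :: "(nat \<Rightarrow> real) set \<Rightarrow> (nat \<Rightarrow> real) \<Rightarrow> nat \<Rightarrow> bool" where
  "avg_in W a l \<longleftrightarrow> (\<exists>fs. avg_ok fs l \<and> set fs \<subseteq> W \<and> a = avgvec fs l)"

definition vfg :: "(nat \<Rightarrow> real) set \<Rightarrow> (nat \<Rightarrow> nat \<Rightarrow> real) \<Rightarrow> (nat \<Rightarrow> nat) \<Rightarrow> bool" where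
  "vfg W a s \<longleftrightarrow> (\<forall>q. avg_in W (a q) (s q)) \<and> (\<forall>q. blk (a q) (a (Suc q)))
      \<and> strict_mono s \<and> (\<forall>q. Max (supp (a q)) < s (Suc q))"

text \<open>alpha_{<omega^xi}((y_k)) = 0, where xs is the sequence xi_n (xs 0 = xi_1).\<close>
definition alpha_index_zero :: "(nat \<Rightarrow> real) set \<Rightarrow> (nat \<Rightarrow> ord) \<Rightarrow> (nat \<Rightarrow> nat \<Rightarrow> real) \<Rightarrow> bool" where
  "alpha_index_zero W xs y \<longleftrightarrow>
    (\<forall>n a s F m. vfg W a s \<and> (\<forall>k. finite (F k)) \<and> (\<forall>k l. k < l \<longrightarrow> setless (F k) (F l))
       \<and> (\<forall>k. (\<lambda>q. Min (supp (a q))) ` F k \<in> schreier (xs n)) \<and> strict_mono m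
     \<longrightarrow> (\<lambda>k. \<Sum>q\<in>F k. \<bar>pair (a q) (y (m k))\<bar>) \<longlonglongrightarrow> 0)"

definition basic_scc :: "nat set set \<Rightarrow> nat set set \<Rightarrow> real \<Rightarrow> nat set \<Rightarrow> (nat \<Rightarrow> real) \<Rightarrow> bool" where
  "basic_scc S\<eta> S\<zeta> \<epsilon> F c \<longleftrightarrow> (\<forall>i\<in>F. c i \<ge> 0) \<and> sum c F = 1 \<and> F \<in> S\<eta>
      \<and> (\<forall>G\<in>S\<zeta>. sum c (G \<inter> F) < \<epsilon>)"

text \<open>sum_{k in F} c_k x_k is an s.c.c. iff sum_k c_k e_{phi_k} is a basic s.c.c.,
  phi_k = min supp x_k.\<close>
definition scc :: "nat set set \<Rightarrow> nat set set \<Rightarrow> real \<Rightarrow> (nat \<Rightarrow> nat \<Rightarrow> real) \<Rightarrow> nat set \<Rightarrow> (nat \<Rightarrow> real) \<Rightarrow> bool" where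
  "scc S\<eta> S\<zeta> \<epsilon> x F c \<longleftrightarrow> (\<forall>k\<in>F. c k \<ge> 0) \<and>
     basic_scc S\<eta> S\<zeta> \<epsilon> ((\<lambda>k. Min (supp (x k))) ` F)
       (\<lambda>j. \<Sum>k\<in>{k\<in>F. Min (supp (x k)) = j}. c k)"

end

theory Submission
  imports Defs
begin

text \<open>Fix \<open>n\<close>, an admissible family \<open>(a q)\<^sub>q\<^sub>\<in>\<^sub>Q\<close> of averages (of sizes \<open>s q\<close>) whose
  minima of supports form an \<open>S\<^sub>\<xi>\<^sub>n\<close> set, and \<open>y = \<Sum>i\<in>G. c i * x i\<close> whose weight on every
  \<open>S\<^sub>\<xi>\<^sub>n\<close> set is below \<open>\<epsilon>\<close>. Split \<open>G\<close> into the vectors \<open>x i\<close> whose range contains the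
  start of some \<open>a q\<close>, those meeting some \<open>a q\<close> in more than \<open>\<delta> * s q\<close> of its summands, and the
  rest. By spreading, the first two parts have weight at most \<open>2 * \<epsilon>\<close> and \<open>2 / \<delta> * \<epsilon>\<close>, and on
  them the signed sum of the averages is a single norming functional, so they contribute at most
  \<open>C\<close> times their weight. A remaining \<open>x i\<close> meets one average only, in few summands, and so
  contributes at most \<open>C * \<delta>\<close>. Along successive sets of averages the sizes tend to infinity and
  the families become \<open>S\<^bsub>\<omega>\<^sup>\<xi>\<^esub>\<close>-admissible, while \<open>\<epsilon>\<^sub>k \<rightarrow> 0\<close>.\<close>

section \<open>The norming set\<close>

lemma blk_apply_eq_0:
  assumes "blk f g" "f p \<noteq> 0"
  shows "g p = 0"
  using assms unfolding blk_def setless_def supp_def by blast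

lemma sum_list_apply_eq_0:
  "(\<And>g. g \<in> set gs \<Longrightarrow> g p = 0) \<Longrightarrow> (\<Sum>g\<leftarrow>gs. g p) = (0::real)"
  by (induction gs) auto

lemma sum_list_blk_apply:
  assumes "sorted_wrt blk gs" "g \<in> set gs" "g p \<noteq> 0"
  shows "(\<Sum>h\<leftarrow>gs. h p) = g p"
  using assms
proof (induction gs)
  case (Cons h gs)
  show ?case
  proof (cases "g = h")
    case True
    with Cons.prems have "(\<Sum>g\<leftarrow>gs. g p) = 0"
      by (intro sum_list_apply_eq_0) (auto intro: blk_apply_eq_0)
    with True show ?thesis by simp
  next
    case False
    with Cons.prems have "g \<in> set gs" "blk h g" by auto
    with Cons.prems(3) have "h p = 0" by (metis blk_apply_eq_0)
    with Cons.IH \<open>g \<in> set gs\<close> Cons.prems show ?thesis by simp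
  qed
qed simp

lemma supp_sum_list_blk:
  assumes "sorted_wrt blk gs"
  shows "supp (\<lambda>i. \<Sum>g\<leftarrow>gs. g i) = (\<Union>g\<in>set gs. supp g)"
proof (intro equalityI subsetI)
  fix i assume "i \<in> supp (\<lambda>i. \<Sum>g\<leftarrow>gs. g i)"
  then obtain g where "g \<in> set gs" "g i \<noteq> 0"
    using sum_list_apply_eq_0[of gs i] unfolding supp_def by auto
  then show "i \<in> (\<Union>g\<in>set gs. supp g)" unfolding supp_def by auto
next
  fix i assume "i \<in> (\<Union>g\<in>set gs. supp g)"
  then obtain g where "g \<in> set gs" "g i \<noteq> 0" unfolding supp_def by blast
  with sum_list_blk_apply[OF assms this] show "i \<in> supp (\<lambda>i. \<Sum>g\<leftarrow>gs. g i)"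
    unfolding supp_def by simp
qed

lemma abs_sum_list_blk_le_one:
  assumes "sorted_wrt blk gs" "\<And>g i. g \<in> set gs \<Longrightarrow> \<bar>g i\<bar> \<le> 1"
  shows "\<bar>\<Sum>g\<leftarrow>gs. g i\<bar> \<le> 1"
proof (cases "\<exists>g\<in>set gs. g i \<noteq> 0")
  case True
  then obtain g where "g \<in> set gs" "g i \<noteq> 0" by blast
  with sum_list_blk_apply[OF assms(1) this] assms(2) show ?thesis by simp
qed (simp add: sum_list_apply_eq_0)

lemma supp_avgvec:
  assumes "avg_ok fs l"
  shows "supp (avgvec fs l) = (\<Union>f\<in>set fs. supp f)"
proof -
  have "supp (avgvec fs l) = supp (\<lambda>i. \<Sum>f\<leftarrow>fs. f i)"
    using assms unfolding avg_ok_def avgvec_def supp_def by auto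
  with assms show ?thesis unfolding avg_ok_def by (simp add: supp_sum_list_blk)
qed

lemma abs_avgvec_le_one:
  assumes "avg_ok fs l" "\<And>f i. f \<in> set fs \<Longrightarrow> \<bar>f i\<bar> \<le> 1"
  shows "\<bar>avgvec fs l i\<bar> \<le> 1"
proof -
  have "\<bar>\<Sum>f\<leftarrow>fs. f i\<bar> \<le> 1" "2 \<le> l"
    using assms abs_sum_list_blk_le_one unfolding avg_ok_def by auto
  then show ?thesis unfolding avgvec_def by (simp add: divide_le_eq)
qed

lemma Wset_bounded_finite_supp:
  assumes "f \<in> Wset SF"
  shows "(\<forall>i. \<bar>f i\<bar> \<le> 1) \<and> finite (supp f) \<and> supp f \<noteq> {}"
  using assms
proof (induction rule: Wset.induct)
  case (unit n s)
  then have "supp (\<lambda>i. if i = n then s else 0) = {n}" unfolding supp_def by auto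
  with unit show ?case by auto
next
  case (average fs l)
  then have "fs \<noteq> []" unfolding avg_ok_def by simp
  with average show ?case by (auto simp: supp_avgvec abs_avgvec_le_one)
next
  case (vfgsum ps)
  define gs where "gs = map (\<lambda>p. avgvec (fst p) (snd p)) ps"
  have gs: "g \<in> set gs \<Longrightarrow> (\<forall>i. \<bar>g i\<bar> \<le> 1) \<and> finite (supp g) \<and> supp g \<noteq> {}" for g
    using vfgsum.IH unfolding gs_def
    by (force simp: supp_avgvec abs_avgvec_le_one avg_ok_def)
  have eq: "(\<Sum>p\<leftarrow>ps. avgvec (fst p) (snd p) i) = (\<Sum>g\<leftarrow>gs. g i)" for i
    unfolding gs_def by (simp add: comp_def)
  have "gs \<noteq> []" "sorted_wrt blk gs"
    using vfgsum.hyps(1,2) unfolding gs_def by auto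
  then show ?case
    unfolding eq using gs abs_sum_list_blk_le_one by (auto simp: supp_sum_list_blk)
qed

lemma supp_uminus [simp]: "supp (\<lambda>i. - f i) = supp f"
  unfolding supp_def by simp

lemma blk_uminus [simp]: "blk (\<lambda>i. - f i) g = blk f g" "blk f (\<lambda>i. - g i) = blk f g"
  unfolding blk_def by simp_all

lemma avg_ok_map_uminus [simp]: "avg_ok (map (\<lambda>f i. - f i) fs) l = avg_ok fs l"
  unfolding avg_ok_def by (simp add: sorted_wrt_map)

lemma avgvec_map_uminus [simp]: "avgvec (map (\<lambda>f i. - f i) fs) l = (\<lambda>i. - avgvec fs l i)"
proof -
  have "(\<Sum>f\<leftarrow>map (\<lambda>f i. - f i) fs. f i) = - (\<Sum>f\<leftarrow>fs. f i)" for i :: nat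
    by (induction fs) simp_all
  then show ?thesis unfolding avgvec_def by auto
qed

lemma Wset_uminus:
  assumes "f \<in> Wset SF"
  shows "(\<lambda>i. - f i) \<in> Wset SF"
  using assms
proof (induction rule: Wset.induct)
  case (unit n s)
  then have "(\<lambda>i. - (if i = n then s else 0)) = (\<lambda>i. if i = n then - s else 0)"
    by auto
  with unit show ?case by (auto intro: Wset.unit)
next
  case (average fs l)
  then have "avgvec (map (\<lambda>f i. - f i) fs) l \<in> Wset SF"
    by (intro Wset.average) auto
  then show ?case by simp
next
  case (vfgsum ps)
  define ps' where "ps' = map (\<lambda>p. (map (\<lambda>f i. - f i) (fst p), snd p)) ps"
  have "(\<lambda>i. \<Sum>p\<leftarrow>ps'. avgvec (fst p) (snd p) i) \<in> Wset SF"
  proof (rule Wset.vfgsum)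
    show "sorted_wrt blk (map (\<lambda>p. avgvec (fst p) (snd p)) ps')"
      using vfgsum.hyps(2) unfolding ps'_def by (simp add: sorted_wrt_map)
  qed (use vfgsum in \<open>auto simp: ps'_def comp_def\<close>)
  moreover have "(\<Sum>p\<leftarrow>ps'. avgvec (fst p) (snd p) i) = - (\<Sum>p\<leftarrow>ps. avgvec (fst p) (snd p) i)" for i
    unfolding ps'_def by (induction ps) simp_all
  ultimately show ?case by simp
qed

lemma setless_chain:
  assumes "\<And>k. setless (A k) (A (Suc k))" "\<And>k. A k \<noteq> {}" "i < j"
  shows "setless (A i) (A j)"
  using assms(3)
proof (induction j)
  case (Suc j)
  then have "i = j \<or> setless (A i) (A j)" using less_SucE by blast
  moreover obtain r where "r \<in> A j" using assms(2) by blast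
  ultimately show ?case using assms(1)[of j] unfolding setless_def by (meson order.strict_trans)
qed simp

lemma avg_in_Wset: "avg_in (Wset SF) a l \<Longrightarrow> a \<in> Wset SF"
  unfolding avg_in_def by (auto intro: Wset.average)

lemma vfg_Wset:
  assumes "vfg (Wset SF) a s"
  shows "a q \<in> Wset SF"
  using assms avg_in_Wset unfolding vfg_def by blast

lemma vfg_blk:
  assumes "vfg (Wset SF) a s" "q < q'"
  shows "blk (a q) (a q')"
proof -
  have "supp (a k) \<noteq> {}" for k
    using Wset_bounded_finite_supp[OF vfg_Wset[OF assms(1)]] by blast
  with assms show ?thesis
    unfolding vfg_def blk_def using setless_chain[of "\<lambda>k. supp (a k)"] by blast
qed

lemma vfg_Max_supp_less_size:
  assumes "vfg W a s" "q < q'"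
  shows "Max (supp (a q)) < s q'"
proof -
  have "Max (supp (a q)) < s (Suc q)" "strict_mono s" using assms(1) unfolding vfg_def by auto
  with assms(2) show ?thesis by (meson Suc_leI order_less_le_trans strict_mono_less_eq)
qed

text \<open>Negating some of the averages keeps the family admissible.\<close>
lemma Wset_signed_sum:
  assumes vfg: "vfg (Wset SF) a s" and Q: "finite Q" "Q \<noteq> {}"
    and adm: "(\<lambda>q. Min (supp (a q))) ` Q \<in> SF"
  shows "(\<lambda>i. \<Sum>q\<in>Q. (if \<sigma> q then 1 else -1) * a q i) \<in> Wset SF"
proof -
  obtain fs where fs: "\<And>q. avg_ok (fs q) (s q) \<and> set (fs q) \<subseteq> Wset SF \<and> a q = avgvec (fs q) (s q)"
    using vfg unfolding vfg_def avg_in_def by metis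
  define sign where "sign q = (if \<sigma> q then fs q else map (\<lambda>f i. - f i) (fs q))" for q
  have avg_sign: "avgvec (sign q) (s q) = (\<lambda>i. (if \<sigma> q then 1 else -1) * a q i)" for q
    using fs[of q] unfolding sign_def by auto
  have supp_sign: "supp (avgvec (sign q) (s q)) = supp (a q)" for q
    unfolding avg_sign supp_def by simp
  define qs where "qs = sorted_list_of_set Q"
  have qs: "set qs = Q" "distinct qs" "sorted_wrt (<) qs"
    using Q unfolding qs_def by auto
  define ps where "ps = map (\<lambda>q. (sign q, s q)) qs"
  have "(\<lambda>i. \<Sum>p\<leftarrow>ps. avgvec (fst p) (snd p) i) \<in> Wset SF"
  proof (rule Wset.vfgsum)
    show "ps \<noteq> []" using qs Q unfolding ps_def by auto
    show "\<forall>p\<in>set ps. avg_ok (fst p) (snd p) \<and> (\<forall>f\<in>set (fst p). f \<in> Wset SF)"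
      using fs unfolding ps_def sign_def by (auto intro: Wset_uminus)
    have "sorted_wrt (\<lambda>q q'. blk (avgvec (sign q) (s q)) (avgvec (sign q') (s q'))) qs"
      by (rule sorted_wrt_mono_rel[OF _ qs(3)])
        (use vfg_blk[OF vfg] in \<open>simp add: blk_def supp_sign\<close>)
    then show "sorted_wrt blk (map (\<lambda>p. avgvec (fst p) (snd p)) ps)"
      unfolding ps_def by (simp add: sorted_wrt_map)
    show "set (map (\<lambda>p. Min (supp (avgvec (fst p) (snd p)))) ps) \<in> SF"
      using adm qs(1) unfolding ps_def by (simp add: supp_sign image_image)
    show "\<forall>r. Suc r < length ps \<longrightarrow> snd (ps ! r) < snd (ps ! Suc r) \<and>
          Max (supp (avgvec (fst (ps ! r)) (snd (ps ! r)))) < snd (ps ! Suc r)"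
    proof (intro allI impI)
      fix r assume "Suc r < length ps"
      then have "Suc r < length qs" "qs ! r < qs ! Suc r"
        using qs(3) sorted_wrt_nth_less unfolding ps_def by auto
      with vfg show "snd (ps ! r) < snd (ps ! Suc r) \<and>
          Max (supp (avgvec (fst (ps ! r)) (snd (ps ! r)))) < snd (ps ! Suc r)"
        unfolding ps_def vfg_def
        by (auto simp: supp_sign strict_mono_less intro: vfg_Max_supp_less_size[OF vfg])
    qed
  qed
  moreover have "(\<Sum>p\<leftarrow>ps. avgvec (fst p) (snd p) i) = (\<Sum>q\<in>Q. (if \<sigma> q then 1 else -1) * a q i)" for i
    unfolding ps_def using qs(1,2) by (simp add: avg_sign comp_def sum_list_distinct_conv_sum_set)
  ultimately show ?thesis by simp
qed

lemma pair_eq_sum_superset: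
  assumes "finite S" "supp x \<subseteq> S"
  shows "pair f x = (\<Sum>i\<in>S. f i * x i)"
  unfolding pair_def using assms by (intro sum.mono_neutral_left) (auto simp: supp_def)

lemma pair_eq_0_if_disjoint: "supp f \<inter> supp x = {} \<Longrightarrow> pair f x = 0"
  unfolding pair_def by (rule sum.neutral) (auto simp: supp_def)

lemma pair_sum_left: "pair (\<lambda>i. \<Sum>q\<in>Q. w q * g q i) x = (\<Sum>q\<in>Q. w q * pair (g q) x)"
  unfolding pair_def by (simp add: sum_distrib_left sum_distrib_right mult.assoc sum.swap[of _ Q])

lemma pair_sum_right:
  assumes "finite G" "\<And>i. i \<in> G \<Longrightarrow> finite (supp (x i))"
  shows "pair f (\<lambda>p. \<Sum>i\<in>G. c i * x i p) = (\<Sum>i\<in>G. c i * pair f (x i))"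
proof -
  define U where "U = (\<Union>i\<in>G. supp (x i))"
  have U: "finite U" "\<And>i. i \<in> G \<Longrightarrow> supp (x i) \<subseteq> U" using assms unfolding U_def by auto
  have "supp (\<lambda>p. \<Sum>i\<in>G. c i * x i p) \<subseteq> U"
    unfolding U_def supp_def by (auto intro: ccontr dest: sum.neutral)
  then have "pair f (\<lambda>p. \<Sum>i\<in>G. c i * x i p) = (\<Sum>p\<in>U. f p * (\<Sum>i\<in>G. c i * x i p))"
    using pair_eq_sum_superset U by blast
  also have "\<dots> = (\<Sum>i\<in>G. c i * (\<Sum>p\<in>U. f p * x i p))"
    by (simp add: sum_distrib_left sum_distrib_right mult.left_commute sum.swap[of _ U])
  also have "\<dots> = (\<Sum>i\<in>G. c i * pair f (x i))"
    using pair_eq_sum_superset U by (intro sum.cong) auto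
  finally show ?thesis .
qed

lemma pair_avgvec:
  "pair (avgvec fs l) x = (\<Sum>t<length fs. pair (fs ! t) x) / real l"
proof -
  have "avgvec fs l = (\<lambda>i. \<Sum>t<length fs. (1 / real l) * (fs ! t) i)"
    unfolding avgvec_def by (simp add: sum_list_sum_nth atLeast0LessThan sum_divide_distrib)
  then have "pair (avgvec fs l) x = (\<Sum>t<length fs. (1 / real l) * pair (fs ! t) x)"
    using pair_sum_left[of "\<lambda>_. 1 / real l" "\<lambda>t. fs ! t" "{..<length fs}"] by simp
  then show ?thesis by (simp add: sum_divide_distrib)
qed

lemma abs_pair_le_xnorm:
  assumes "f \<in> Wset SF"
  shows "\<bar>pair f x\<bar> \<le> xnorm (Wset SF) x"
proof -
  have "pair g x \<le> (\<Sum>i\<in>supp x. \<bar>x i\<bar>)" if "g \<in> Wset SF" for g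
    unfolding pair_def
  proof (rule sum_mono)
    fix i
    have "\<bar>g i\<bar> \<le> 1" using Wset_bounded_finite_supp[OF that] by blast
    then show "g i * x i \<le> \<bar>x i\<bar>"
      by (metis abs_ge_self abs_mult mult_left_le_one_le abs_ge_zero order_trans)
  qed
  then have bdd: "bdd_above ((\<lambda>f. pair f x) ` Wset SF)" by (rule bdd_aboveI2)
  have "pair h x \<le> xnorm (Wset SF) x" if "h \<in> Wset SF" for h
    unfolding xnorm_def using that bdd by (auto intro: cSUP_upper)
  from this[OF assms] this[OF Wset_uminus[OF assms]] show ?thesis
    unfolding pair_def by (simp add: sum_negf)
qed

section \<open>Schreier families\<close>

lemma schreier_finite: "E \<in> schreier \<zeta> \<Longrightarrow> finite E"
  by (induction \<zeta> arbitrary: E) auto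

lemma schreier_empty: "{} \<in> schreier \<zeta>"
  by (induction \<zeta>) auto

lemma schreier_singleton: "1 \<le> p \<Longrightarrow> {p} \<in> schreier \<zeta>"
proof (induction \<zeta>)
  case (OS \<zeta>)
  then show ?case by (auto intro!: exI[of _ "[{p}]"])
qed (auto intro!: exI[of _ 0])

lemma schreier_mono_valid:
  assumes "valid (OL \<zeta>)" "n \<le> j"
  shows "schreier (\<zeta> n) \<subseteq> schreier (\<zeta> j)"
  using assms(2)
proof (induction j)
  case (Suc j)
  show ?case
  proof (cases "n = Suc j")
    case False
    with Suc have "schreier (\<zeta> n) \<subseteq> schreier (\<zeta> j)" by simp
    also have "\<dots> \<subseteq> schreier (\<zeta> (Suc j))" using assms(1) by simp
    finally show ?thesis .
  qed simp
qed simp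

lemma Min_hd_le_Min_sorted_setless:
  assumes "sorted_wrt setless Es" "\<And>e. e \<in> set Es \<Longrightarrow> finite e \<and> e \<noteq> {}" "e \<in> set Es"
  shows "Min (hd Es) \<le> Min e"
proof (cases Es)
  case (Cons e0 Es')
  show ?thesis
  proof (cases "e = e0")
    case False
    with assms Cons have "setless e0 e" "finite e0" "e0 \<noteq> {}" "finite e" "e \<noteq> {}" by auto
    with Cons show ?thesis unfolding setless_def by (simp add: Min_in less_imp_le)
  qed (simp add: Cons)
qed (use assms in simp)

lemma setless_preimage:
  assumes "strict_mono_on P \<psi>" "setless e e'"
  shows "setless {p\<in>P. \<psi> p \<in> e} {p\<in>P. \<psi> p \<in> e'}"
  unfolding setless_def
proof (intro ballI)
  fix p p' assume "p \<in> {p\<in>P. \<psi> p \<in> e}" "p' \<in> {p\<in>P. \<psi> p \<in> e'}"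
  with assms(2) have "p \<in> P" "p' \<in> P" "\<psi> p < \<psi> p'" unfolding setless_def by auto
  then show "p < p'"
    using strict_mono_onD[OF assms(1), of p' p] by (metis less_asym linorder_neqE_nat)
qed

lemma schreier_spreading:
  assumes "E \<in> schreier \<zeta>" "finite P" "\<And>p. p \<in> P \<Longrightarrow> \<psi> p \<in> E \<and> \<psi> p \<le> p"
    "strict_mono_on P \<psi>"
  shows "P \<in> schreier \<zeta>"
  using assms
proof (induction \<zeta> arbitrary: E P)
  case OZ
  show ?case
  proof (cases "P = {}")
    case False
    then obtain p where p: "p \<in> P" by blast
    with OZ.prems(1,3) obtain n where "E = {n}" "1 \<le> n" by fastforce
    with OZ.prems(3) have \<psi>: "\<And>p. p \<in> P \<Longrightarrow> \<psi> p = n \<and> n \<le> p" by auto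
    have "p' = p" if "p' \<in> P" for p'
    proof (rule ccontr)
      assume "p' \<noteq> p"
      then consider "p < p'" | "p' < p" by linarith
      then show False
      proof cases
        case 1
        with strict_mono_onD[OF OZ.prems(4) p that] \<psi> p that show False by simp
      next
        case 2
        with strict_mono_onD[OF OZ.prems(4) that p] \<psi> p that show False by simp
      qed
    qed
    with p have "P = {p}" by blast
    moreover have "1 \<le> p" using \<psi>[OF p] \<open>1 \<le> n\<close> by simp
    ultimately show ?thesis by auto
  qed simp
next
  case (OS \<zeta>)
  show ?case
  proof (cases "P = {}")
    case False
    with OS.prems(3) have "E \<noteq> {}" by blast
    with OS.prems(1) obtain Es where Es: "Es \<noteq> []" "E = \<Union>(set Es)"
       "\<forall>e\<in>set Es. e \<in> schreier \<zeta> \<and> e \<noteq> {}" "sorted_wrt setless Es" "length Es \<le> Min (hd Es)"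
      by auto
    have Es_fin: "finite e \<and> e \<noteq> {}" if "e \<in> set Es" for e
      using Es(3) that schreier_finite by blast
    define part where "part e = {p\<in>P. \<psi> p \<in> e}" for e
    define Ps where "Ps = filter (\<lambda>S. S \<noteq> {}) (map part Es)"
    have P_eq: "P = \<Union>(set Ps)"
      using OS.prems(3) Es(2) unfolding Ps_def part_def by fastforce
    then have "Ps \<noteq> []" using False by auto
    have Ps_schreier: "S \<in> schreier \<zeta> \<and> S \<noteq> {}" if S_in: "S \<in> set Ps" for S
    proof -
      obtain e where e: "e \<in> set Es" "S = part e" "S \<noteq> {}" using S_in unfolding Ps_def by auto
      have sub: "part e \<subseteq> P" unfolding part_def by blast
      have "S \<in> schreier \<zeta>"
        unfolding e(2)
      proof (rule OS.IH)
        show "e \<in> schreier \<zeta>" using Es(3) e(1) by blast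
        show "finite (part e)" using finite_subset[OF sub OS.prems(2)] .
        show "\<psi> p \<in> e \<and> \<psi> p \<le> p" if "p \<in> part e" for p
          using that OS.prems(3) unfolding part_def by blast
        show "strict_mono_on (part e) \<psi>" using monotone_on_subset[OF OS.prems(4) sub] .
      qed
      with e show ?thesis by blast
    qed
    have "sorted_wrt setless (map part Es)"
      unfolding sorted_wrt_map part_def
      by (rule sorted_wrt_mono_rel[OF _ Es(4)]) (rule setless_preimage[OF OS.prems(4)])
    then have Ps_sorted: "sorted_wrt setless Ps" unfolding Ps_def by (rule sorted_wrt_filter)
    obtain e0 where e0: "e0 \<in> set Es" "hd Ps = part e0" "part e0 \<noteq> {}"
      using \<open>Ps \<noteq> []\<close> hd_in_set[of Ps] unfolding Ps_def by auto
    have "Min (hd Es) \<le> Min e0"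
      using Min_hd_le_Min_sorted_setless[OF Es(4) Es_fin e0(1)] .
    moreover have "Min e0 \<le> Min (part e0)"
    proof -
      have "Min (part e0) \<in> part e0" using OS.prems(2) e0(3) unfolding part_def by (intro Min_in) auto
      then have "\<psi> (Min (part e0)) \<in> e0" "\<psi> (Min (part e0)) \<le> Min (part e0)"
        using OS.prems(3) unfolding part_def by auto
      moreover have "Min e0 \<le> \<psi> (Min (part e0))"
        using Es_fin[OF e0(1)] calculation(1) by (simp add: Min_le)
      ultimately show ?thesis by linarith
    qed
    moreover have "length Ps \<le> length Es"
      unfolding Ps_def by (metis length_filter_le length_map)
    ultimately have "length Ps \<le> Min (hd Ps)" using Es(5) unfolding e0(2) by linarith
    with P_eq \<open>Ps \<noteq> []\<close> Ps_schreier Ps_sorted show ?thesis by auto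
  qed simp
next
  case (OL f)
  from OL.prems(1) obtain n where n: "E \<in> schreier (f n)" "E = {} \<or> Suc n \<le> Min E" by auto
  have "P \<in> schreier (f n)"
    using OL.IH[OF rangeI n(1) OL.prems(2-4)] .
  moreover have "Suc n \<le> Min P" if "P \<noteq> {}"
  proof -
    have "Min P \<in> P" using OL.prems(2) that by simp
    then have \<psi>: "\<psi> (Min P) \<in> E" "\<psi> (Min P) \<le> Min P" using OL.prems(3) by auto
    then have "Min E \<le> \<psi> (Min P)" using schreier_finite[OF n(1)] by (simp add: Min_le)
    with \<psi> n(2) show ?thesis by auto
  qed
  ultimately show ?case by (auto intro!: exI[of _ n])
qed

section \<open>The estimate for one family of averages\<close>

text \<open>A single admissible family \<open>(a q)\<^sub>q\<^sub>\<in>\<^sub>Q\<close> of averages tested against a single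
  combination \<open>\<Sum>i\<in>G. c i * x i\<close>; the paper's \<open>\<xi>\<^sub>n\<close> is \<open>\<zeta>\<close> here.\<close>
locale pairing_estimate =
  fixes SF :: "nat set set" and x :: "nat \<Rightarrow> nat \<Rightarrow> real" and C :: real
    and a :: "nat \<Rightarrow> nat \<Rightarrow> real" and s :: "nat \<Rightarrow> nat"
    and Q G :: "nat set" and c :: "nat \<Rightarrow> real" and \<zeta> :: ord and \<epsilon> \<delta> :: real
  assumes blockseq: "blockseq x"
    and pair_x_le: "\<And>k f. f \<in> Wset SF \<Longrightarrow> \<bar>pair f (x k)\<bar> \<le> C"
    and vfg: "vfg (Wset SF) a s"
    and finite_Q: "finite Q"
    and Q_schreier: "(\<lambda>q. Min (supp (a q))) ` Q \<in> schreier \<zeta>"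
    and Q_admissible: "(\<lambda>q. Min (supp (a q))) ` Q \<in> SF"
    and finite_G: "finite G"
    and c_nonneg: "\<And>i. i \<in> G \<Longrightarrow> 0 \<le> c i" and sum_c_le: "sum c G \<le> 1"
    and weight_less: "\<And>I. I \<subseteq> G \<Longrightarrow> (\<lambda>i. Min (supp (x i))) ` I \<in> schreier \<zeta> \<Longrightarrow> sum c I < \<epsilon>"
    and \<delta>_pos: "0 < \<delta>" and size_large: "\<And>q. q \<in> Q \<Longrightarrow> 1 \<le> \<delta> * real (s q)"
begin

definition fs :: "nat \<Rightarrow> (nat \<Rightarrow> real) list" where
  "fs q = (SOME fs. avg_ok fs (s q) \<and> set fs \<subseteq> Wset SF \<and> a q = avgvec fs (s q))"

definition xmin :: "nat \<Rightarrow> nat" where "xmin i = Min (supp (x i))"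
definition xmax :: "nat \<Rightarrow> nat" where "xmax i = Max (supp (x i))"
definition amin :: "nat \<Rightarrow> nat" where "amin q = Min (supp (a q))"

definition meets :: "nat \<Rightarrow> nat \<Rightarrow> bool" where
  "meets q i \<longleftrightarrow> supp (a q) \<inter> supp (x i) \<noteq> {}"

definition hits :: "nat \<Rightarrow> nat \<Rightarrow> nat" where
  "hits q i = card {t. t < length (fs q) \<and> supp (fs q ! t) \<inter> supp (x i) \<noteq> {}}"

definition straddled :: "nat set" where
  "straddled = {i\<in>G. \<exists>q\<in>Q. xmin i \<le> amin q \<and> amin q \<le> xmax i}"

definition heavy :: "nat \<Rightarrow> nat set" where
  "heavy q = {i\<in>G - straddled. \<delta> * real (s q) < real (hits q i)}"

lemma fs: "avg_ok (fs q) (s q)" "set (fs q) \<subseteq> Wset SF" "a q = avgvec (fs q) (s q)"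
proof -
  have "\<exists>fs. avg_ok fs (s q) \<and> set fs \<subseteq> Wset SF \<and> a q = avgvec fs (s q)"
    using vfg unfolding vfg_def avg_in_def by blast
  then show "avg_ok (fs q) (s q)" "set (fs q) \<subseteq> Wset SF" "a q = avgvec (fs q) (s q)"
    unfolding fs_def by (metis (mono_tags, lifting) someI_ex)+
qed

lemma C_nonneg: "0 \<le> C"
  using pair_x_le[OF Wset.unit[of 1 1], of 0] by simp

lemma x_finite: "finite (supp (x i))" and x_nonempty: "supp (x i) \<noteq> {}"
  and x_0: "0 \<notin> supp (x i)"
  using blockseq unfolding blockseq_def by auto

lemma x_less: "i < i' \<Longrightarrow> p \<in> supp (x i) \<Longrightarrow> p' \<in> supp (x i') \<Longrightarrow> p < p'"
  using setless_chain[of "\<lambda>k. supp (x k)"] blockseq x_nonempty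
  unfolding blockseq_def setless_def by blast

lemma xmin_le: "p \<in> supp (x i) \<Longrightarrow> xmin i \<le> p" and le_xmax: "p \<in> supp (x i) \<Longrightarrow> p \<le> xmax i"
  unfolding xmin_def xmax_def using x_finite by auto

lemma xmin_in: "xmin i \<in> supp (x i)" and xmax_in: "xmax i \<in> supp (x i)"
  unfolding xmin_def xmax_def using x_finite x_nonempty by auto

lemma xmax_less_xmin: "i < i' \<Longrightarrow> xmax i < xmin i'"
  using x_less xmax_in xmin_in by blast

lemma xmin_less: "i < i' \<Longrightarrow> xmin i < xmin i'"
  using x_less xmin_in by blast

lemma xmin_less_iff: "xmin i < xmin i' \<longleftrightarrow> i < i'"
  using xmin_less by (metis less_asym linorder_neqE_nat)

lemma xmin_ge_1: "1 \<le> xmin i"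
  using xmin_in x_0 by (metis less_one not_le)

lemma a_finite: "finite (supp (a q))" and a_nonempty: "supp (a q) \<noteq> {}"
  using Wset_bounded_finite_supp[OF vfg_Wset[OF vfg]] by auto

lemma a_less: "q < q' \<Longrightarrow> p \<in> supp (a q) \<Longrightarrow> p' \<in> supp (a q') \<Longrightarrow> p < p'"
  using vfg_blk[OF vfg] unfolding blk_def setless_def by blast

lemma amin_in: "amin q \<in> supp (a q)" and amin_le: "p \<in> supp (a q) \<Longrightarrow> amin q \<le> p"
  unfolding amin_def using a_finite a_nonempty by auto

lemma amin_less: "q < q' \<Longrightarrow> amin q < amin q'"
  using a_less amin_in by blast

lemma amin_less_iff: "amin q < amin q' \<longleftrightarrow> q < q'"
  using amin_less by (metis less_asym linorder_neqE_nat)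

lemma s_ge_2: "2 \<le> s q"
  using fs(1) unfolding avg_ok_def by simp

lemma supp_a: "supp (a q) = (\<Union>f\<in>set (fs q). supp f)"
  using supp_avgvec[OF fs(1)] fs(3)[of q] by simp

lemma hits_pos_meets: "0 < hits q i \<Longrightarrow> meets q i"
proof -
  assume "0 < hits q i"
  then obtain t where t: "t < length (fs q)" "supp (fs q ! t) \<inter> supp (x i) \<noteq> {}"
    unfolding hits_def card_gt_0_iff by blast
  then obtain p where p: "p \<in> supp (fs q ! t)" "p \<in> supp (x i)" by blast
  with t(1) have "p \<in> supp (a q)" unfolding supp_a by (meson UN_iff nth_mem)
  with p(2) show ?thesis unfolding meets_def by blast
qed

lemma abs_pair_a_x_le: "\<bar>pair (a q) (x i)\<bar> \<le> C * real (hits q i) / real (s q)"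
proof -
  define T where "T = {t. t < length (fs q) \<and> supp (fs q ! t) \<inter> supp (x i) \<noteq> {}}"
  have "\<bar>\<Sum>t<length (fs q). pair (fs q ! t) (x i)\<bar> \<le> (\<Sum>t<length (fs q). \<bar>pair (fs q ! t) (x i)\<bar>)"
    by (rule sum_abs)
  also have "\<dots> = (\<Sum>t\<in>T. \<bar>pair (fs q ! t) (x i)\<bar>)"
    by (rule sum.mono_neutral_right) (auto simp: T_def pair_eq_0_if_disjoint)
  also have "\<dots> \<le> (\<Sum>t\<in>T. C)"
    by (intro sum_mono pair_x_le subsetD[OF fs(2)[of q]] nth_mem) (simp add: T_def)
  also have "\<dots> = C * real (hits q i)" unfolding hits_def T_def by simp
  finally have "\<bar>\<Sum>t<length (fs q). pair (fs q ! t) (x i)\<bar> \<le> C * real (hits q i)" .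
  moreover have "pair (a q) (x i) = (\<Sum>t<length (fs q). pair (fs q ! t) (x i)) / real (s q)"
    using pair_avgvec fs(3)[of q] by simp
  ultimately show ?thesis
    using s_ge_2[of q] by (simp add: divide_right_mono)
qed

lemma meets_unique:
  assumes "i \<notin> straddled" "i \<in> G" "q \<in> Q" "q' \<in> Q" "meets q i" "meets q' i"
  shows "q = q'"
proof -
  have False if q2: "q2 \<in> Q" and less: "q1 < q2" and "meets q1 i" "meets q2 i" for q1 q2
  proof -
    obtain p where p: "p \<in> supp (a q1)" "p \<in> supp (x i)"
      using \<open>meets q1 i\<close> unfolding meets_def by blast
    obtain p' where p': "p' \<in> supp (a q2)" "p' \<in> supp (x i)"
      using \<open>meets q2 i\<close> unfolding meets_def by blast
    have "amin q2 \<le> xmax i" using amin_le[OF p'(1)] le_xmax[OF p'(2)] by linarith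
    moreover have "xmin i \<le> amin q2" using xmin_le[OF p(2)] a_less[OF less p(1) amin_in] by linarith
    ultimately have "i \<in> straddled" using assms(2) q2 unfolding straddled_def by blast
    with assms(1) show False by blast
  qed
  with assms show ?thesis by (metis linorder_neqE_nat)
qed

lemma meets_less_xmin:
  assumes "i \<notin> straddled" "i \<in> G" "q \<in> Q" "meets q i"
  shows "amin q < xmin i"
proof (rule ccontr)
  obtain p where p: "p \<in> supp (a q)" "p \<in> supp (x i)" using assms(4) unfolding meets_def by blast
  assume "\<not> amin q < xmin i"
  with amin_le[OF p(1)] le_xmax[OF p(2)] assms(2,3) have "i \<in> straddled"
    unfolding straddled_def by force
  with assms(1) show False by blast
qed

lemma meets_mono:
  assumes "meets q i" "meets q' i'" "i < i'"
  shows "q \<le> q'"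
proof (rule ccontr)
  assume "\<not> q \<le> q'"
  obtain p where p: "p \<in> supp (a q)" "p \<in> supp (x i)" using assms(1) unfolding meets_def by blast
  obtain p' where p': "p' \<in> supp (a q')" "p' \<in> supp (x i')" using assms(2) unfolding meets_def by blast
  from x_less[OF assms(3) p(2) p'(2)] a_less[OF _ p'(1) p(1)] \<open>\<not> q \<le> q'\<close> show False by simp
qed

text \<open>Every summand of \<open>a q\<close> that meets \<open>x i\<close>, except the leftmost one, lies to the right of
  \<open>xmin i\<close> and meets \<open>(xmin i, xmax i]\<close>; these intervals are disjoint for distinct \<open>i\<close>.\<close>
lemma sum_hits_le:
  assumes "finite I"
  shows "(\<Sum>i\<in>I. hits q i - 1) \<le> length (fs q)"
proof -
  define L where "L = length (fs q)"
  define T where "T i = {t. t < L \<and> supp (fs q ! t) \<inter> supp (x i) \<noteq> {}}" for i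
  define S where "S i = {t. t < L \<and> supp (fs q ! t) \<inter> {xmin i<..xmax i} \<noteq> {}
    \<and> supp (fs q ! t) \<subseteq> {xmin i<..}}" for i
  have sorted: "sorted_wrt blk (fs q)" using fs(1) unfolding avg_ok_def by blast
  have TS: "card (T i) - 1 \<le> card (S i)" for i
  proof (cases "T i = {}")
    case False
    have T_fin: "finite (T i)" unfolding T_def by auto
    define t0 where "t0 = Min (T i)"
    have t0: "t0 \<in> T i" unfolding t0_def using T_fin False by simp
    have "T i - {t0} \<subseteq> S i"
    proof
      fix t assume t: "t \<in> T i - {t0}"
      then have "t0 \<le> t" "t \<noteq> t0" "t < L" unfolding t0_def using T_fin by (auto simp: T_def)
      then have "t0 < t" "t < L" by auto
      then have b: "blk (fs q ! t0) (fs q ! t)"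
        using sorted sorted_wrt_nth_less unfolding L_def by blast
      obtain p0 where p0: "p0 \<in> supp (fs q ! t0)" "p0 \<in> supp (x i)" using t0 unfolding T_def by blast
      obtain p where p: "p \<in> supp (fs q ! t)" "p \<in> supp (x i)" using t unfolding T_def by blast
      have "\<forall>p'\<in>supp (fs q ! t). p0 < p'" using b p0(1) unfolding blk_def setless_def by blast
      with xmin_le[OF p0(2)] p le_xmax[OF p(2)] \<open>t < L\<close> show "t \<in> S i"
        unfolding S_def by fastforce
    qed
    then have "card (T i - {t0}) \<le> card (S i)"
      by (intro card_mono) (auto simp: S_def)
    then show ?thesis using t0 T_fin by simp
  qed simp
  have disjoint: "S i \<inter> S i' = {}" if "i < i'" for i i'
  proof -
    have False if t: "t \<in> S i" and t': "t \<in> S i'" for t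
    proof -
      obtain p where "p \<in> supp (fs q ! t)" "xmin i < p" "p \<le> xmax i" using t unfolding S_def by auto
      moreover have "supp (fs q ! t) \<subseteq> {xmin i'<..}" using t' unfolding S_def by auto
      ultimately show False using xmax_less_xmin[OF \<open>i < i'\<close>] by auto
    qed
    then show ?thesis by blast
  qed
  have "(\<Sum>i\<in>I. hits q i - 1) \<le> (\<Sum>i\<in>I. card (S i))"
    by (rule sum_mono) (use TS in \<open>simp add: hits_def T_def L_def\<close>)
  also have "\<dots> = card (\<Union>i\<in>I. S i)"
  proof (rule card_UN_disjoint[symmetric])
    show "\<forall>i\<in>I. finite (S i)" unfolding S_def by simp
    show "\<forall>i\<in>I. \<forall>j\<in>I. i \<noteq> j \<longrightarrow> S i \<inter> S j = {}"
      using disjoint by (metis inf_commute linorder_neqE_nat)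
  qed (rule assms)
  also have "\<dots> \<le> card {..<L}" by (rule card_mono) (auto simp: S_def)
  finally show ?thesis unfolding L_def by simp
qed

lemma card_heavy_le:
  assumes "q \<in> Q"
  shows "real (card (heavy q)) \<le> 2 / \<delta>"
proof -
  have "\<delta> * real (s q) / 2 \<le> real (hits q i - 1)" if "i \<in> heavy q" for i
  proof -
    have "\<delta> * real (s q) < real (hits q i)" using that unfolding heavy_def by simp
    with size_large[OF assms] have "2 \<le> hits q i" by linarith
    with \<open>\<delta> * real (s q) < real (hits q i)\<close> show ?thesis by (simp add: of_nat_diff)
  qed
  then have "real (card (heavy q)) * (\<delta> * real (s q) / 2) \<le> (\<Sum>i\<in>heavy q. real (hits q i - 1))"
    using sum_mono[of "heavy q" "\<lambda>_. \<delta> * real (s q) / 2"] by simp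
  also have "\<dots> \<le> real (s q)"
    using sum_hits_le[of "heavy q" q] fs(1)[of q] finite_G unfolding avg_ok_def heavy_def
    by (simp flip: of_nat_sum)
  finally have "real (card (heavy q)) * \<delta> / 2 * real (s q) \<le> 1 * real (s q)" by simp
  then have "real (card (heavy q)) * \<delta> \<le> 2" using s_ge_2[of q] by (simp add: mult_le_cancel_right)
  then show ?thesis using \<delta>_pos by (simp add: field_simps)
qed

lemma weight_less_if_dominated:
  assumes "I \<subseteq> G" and g: "\<And>i. i \<in> I \<Longrightarrow> g i \<in> Q \<and> amin (g i) \<le> xmin i"
    and "strict_mono_on I g"
  shows "sum c I < \<epsilon>"
proof -
  have inj: "inj_on xmin I"
    by (intro inj_onI) (metis xmin_less_iff less_irrefl linorder_neqE_nat)
  define \<psi> where "\<psi> p = amin (g (inv_into I xmin p))" for p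
  have \<psi>: "\<psi> (xmin i) = amin (g i)" if "i \<in> I" for i
    unfolding \<psi>_def using inv_into_f_f[OF inj that] by simp
  have "xmin ` I \<in> schreier \<zeta>"
  proof (rule schreier_spreading[OF Q_schreier[unfolded amin_def[symmetric]]])
    show "finite (xmin ` I)" using assms(1) finite_G finite_subset by blast
    show "\<psi> p \<in> amin ` Q \<and> \<psi> p \<le> p" if "p \<in> xmin ` I" for p
      using that \<psi> g by auto
    show "strict_mono_on (xmin ` I) \<psi>"
    proof (rule strict_mono_onI)
      fix p p' assume "p \<in> xmin ` I" "p' \<in> xmin ` I" "p < p'"
      then obtain i i' where i: "i \<in> I" "i' \<in> I" "p = xmin i" "p' = xmin i'" by blast
      with \<open>p < p'\<close> have "i < i'" by (simp add: xmin_less_iff)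
      with i strict_mono_onD[OF assms(3)] show "\<psi> p < \<psi> p'" using \<psi> amin_less by simp
    qed
  qed
  with weight_less[OF assms(1)] show ?thesis unfolding xmin_def[abs_def] by blast
qed

text \<open>Among the straddled vectors at most one lies to the left of all the averages; the others
  are dominated by the last average starting to their left.\<close>
lemma weight_straddled_le: "sum c straddled \<le> 2 * \<epsilon>"
proof -
  define A0 where "A0 = {i\<in>straddled. \<forall>q\<in>Q. xmin i \<le> amin q}"
  define A1 where "A1 = straddled - A0"
  have straddled_G: "straddled \<subseteq> G" unfolding straddled_def by auto
  then have "finite straddled" using finite_G finite_subset by blast
  then have split: "sum c straddled = sum c A0 + sum c A1"
    unfolding A1_def using sum.subset_diff[of A0 straddled c] by (simp add: A0_def)
  have A0_single: "i = i'" if "i \<in> A0" "i' \<in> A0" for i i'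
  proof -
    have False if j: "j \<in> A0" and j': "j' \<in> A0" and "j < j'" for j j'
    proof -
      obtain q where "q \<in> Q" "amin q \<le> xmax j" using j unfolding A0_def straddled_def by blast
      with xmax_less_xmin[OF \<open>j < j'\<close>] j' show False unfolding A0_def by fastforce
    qed
    with that show ?thesis by (metis linorder_neqE_nat)
  qed
  have "sum c A0 \<le> \<epsilon>"
  proof (cases "A0 = {}")
    case True
    with weight_less[of "{}"] schreier_empty show ?thesis by simp
  next
    case False
    then obtain i0 where "A0 = {i0}" "i0 \<in> G" using A0_single straddled_G unfolding A0_def by blast
    with weight_less[of "{i0}"] schreier_singleton[OF xmin_ge_1] show ?thesis
      unfolding xmin_def by simp
  qed
  moreover have "sum c A1 < \<epsilon>"
  proof -
    define g where "g i = Max {q\<in>Q. amin q < xmin i}" for i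
    have g: "g i \<in> Q \<and> amin (g i) < xmin i" if "i \<in> A1" for i
    proof -
      have "{q\<in>Q. amin q < xmin i} \<noteq> {}" using that unfolding A1_def A0_def by auto
      then have "g i \<in> {q\<in>Q. amin q < xmin i}" unfolding g_def using finite_Q by (intro Max_in) auto
      then show ?thesis by simp
    qed
    show ?thesis
    proof (rule weight_less_if_dominated)
      show "A1 \<subseteq> G" using straddled_G unfolding A1_def by blast
      show "g i \<in> Q \<and> amin (g i) \<le> xmin i" if "i \<in> A1" for i using g[OF that] by simp
      show "strict_mono_on A1 g"
      proof (rule strict_mono_onI)
        fix i i' assume i: "i \<in> A1" "i' \<in> A1" "i < i'"
        obtain q where q: "q \<in> Q" "xmin i \<le> amin q" "amin q \<le> xmax i"
          using i(1) unfolding A1_def straddled_def by blast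
        have "q \<le> g i'"
          using q(1,3) xmax_less_xmin[OF i(3)] finite_Q unfolding g_def by (intro Max_ge) auto
        moreover have "amin (g i) < amin q" using g[OF i(1)] q(2) by linarith
        then have "g i < q" by (simp add: amin_less_iff)
        ultimately show "g i < g i'" by simp
      qed
    qed
  qed
  ultimately show ?thesis using split by linarith
qed

lemma heavy_meets:
  assumes "i \<in> heavy q"
  shows "meets q i"
proof (rule hits_pos_meets)
  have "0 \<le> \<delta> * real (s q)" using \<delta>_pos by simp
  with assms have "0 < real (hits q i)" unfolding heavy_def by auto
  then show "0 < hits q i" by simp
qed

lemma heavy_disjoint:
  assumes "q \<in> Q" "q' \<in> Q" "q \<noteq> q'"
  shows "heavy q \<inter> heavy q' = {}"
proof -
  have False if i: "i \<in> heavy q" and i': "i \<in> heavy q'" for i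
  proof -
    from i have "i \<notin> straddled" "i \<in> G" unfolding heavy_def by auto
    from meets_unique[OF this assms(1,2) heavy_meets[OF i] heavy_meets[OF i']] assms(3)
    show False by simp
  qed
  then show ?thesis by blast
qed

lemma weight_heavy_representatives_less:
  assumes "Q' \<subseteq> Q" and \<rho>: "\<And>q. q \<in> Q' \<Longrightarrow> \<rho> q \<in> heavy q"
  shows "sum c (\<rho> ` Q') < \<epsilon>"
proof -
  define g where "g = inv_into Q' \<rho>"
  have g: "g i \<in> Q'" "\<rho> (g i) = i" if "i \<in> \<rho> ` Q'" for i
    using that unfolding g_def by (auto simp: inv_into_into f_inv_into_f)
  have i_heavy: "i \<in> heavy (g i)" "g i \<in> Q" if "i \<in> \<rho> ` Q'" for i
    using \<rho>[OF g(1)[OF that]] g[OF that] assms(1) by auto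
  show ?thesis
  proof (rule weight_less_if_dominated)
    show "\<rho> ` Q' \<subseteq> G" using i_heavy unfolding heavy_def by blast
    show "g i \<in> Q \<and> amin (g i) \<le> xmin i" if "i \<in> \<rho> ` Q'" for i
      using i_heavy[OF that] meets_less_xmin[OF _ _ _ heavy_meets] unfolding heavy_def
      by (auto intro: less_imp_le)
    show "strict_mono_on (\<rho> ` Q') g"
    proof (rule strict_mono_onI)
      fix i i' assume i: "i \<in> \<rho> ` Q'" "i' \<in> \<rho> ` Q'" "i < i'"
      have "g i \<le> g i'" using meets_mono[OF heavy_meets heavy_meets i(3)] i_heavy i by blast
      moreover have "g i \<noteq> g i'" using g(2)[OF i(1)] g(2)[OF i(2)] i(3) by force
      ultimately show "g i < g i'" by simp
    qed
  qed
qed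

text \<open>Each \<open>heavy q\<close> has at most \<open>2 / \<delta>\<close> elements and their heaviest representatives form a
  spread set.\<close>
lemma weight_heavy_le: "sum c (\<Union>q\<in>Q. heavy q) \<le> 2 / \<delta> * \<epsilon>"
proof -
  define Q' where "Q' = {q\<in>Q. heavy q \<noteq> {}}"
  have finite_heavy: "finite (heavy q)" for q unfolding heavy_def using finite_G by auto
  have "\<exists>i\<in>heavy q. \<forall>i'\<in>heavy q. c i' \<le> c i" if "q \<in> Q'" for q
  proof -
    have "Max (c ` heavy q) \<in> c ` heavy q" using that finite_heavy unfolding Q'_def by simp
    then obtain i where "i \<in> heavy q" "c i = Max (c ` heavy q)" by (metis imageE)
    moreover have "c i' \<le> Max (c ` heavy q)" if "i' \<in> heavy q" for i'
      using finite_heavy[of q] that by simp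
    ultimately show ?thesis by (intro bexI[of _ i]) auto
  qed
  then have "\<forall>q\<in>Q'. \<exists>i. i \<in> heavy q \<and> (\<forall>i'\<in>heavy q. c i' \<le> c i)" by blast
  from bchoice[OF this] obtain \<rho>
    where \<rho>: "\<And>q. q \<in> Q' \<Longrightarrow> \<rho> q \<in> heavy q \<and> (\<forall>i'\<in>heavy q. c i' \<le> c (\<rho> q))"
    by blast
  have "sum c (\<Union>q\<in>Q. heavy q) = (\<Sum>q\<in>Q. sum c (heavy q))"
    using finite_Q finite_heavy heavy_disjoint by (intro sum.UNION_disjoint) auto
  also have "\<dots> = (\<Sum>q\<in>Q'. sum c (heavy q))"
    using finite_Q by (intro sum.mono_neutral_right) (auto simp: Q'_def)
  also have "\<dots> \<le> (\<Sum>q\<in>Q'. 2 / \<delta> * c (\<rho> q))"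
  proof (rule sum_mono)
    fix q assume q: "q \<in> Q'"
    have "sum c (heavy q) \<le> real (card (heavy q)) * c (\<rho> q)"
      using \<rho>[OF q] by (intro sum_bounded_above) blast
    also have "\<dots> \<le> 2 / \<delta> * c (\<rho> q)"
    proof (rule mult_right_mono)
      show "real (card (heavy q)) \<le> 2 / \<delta>" using q card_heavy_le unfolding Q'_def by blast
      show "0 \<le> c (\<rho> q)" using \<rho>[OF q] c_nonneg unfolding heavy_def by blast
    qed
    finally show "sum c (heavy q) \<le> 2 / \<delta> * c (\<rho> q)" .
  qed
  also have "\<dots> = 2 / \<delta> * sum c (\<rho> ` Q')"
  proof -
    have "inj_on \<rho> Q'"
    proof (rule inj_onI, rule ccontr)
      fix q q' assume q: "q \<in> Q'" "q' \<in> Q'" "\<rho> q = \<rho> q'" "q \<noteq> q'"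
      then have "\<rho> q \<in> heavy q \<inter> heavy q'" using \<rho>[OF q(1)] \<rho>[OF q(2)] by simp
      with heavy_disjoint[OF _ _ q(4)] q(1,2) show False unfolding Q'_def by auto
    qed
    then show ?thesis by (simp add: sum.reindex sum_distrib_left)
  qed
  also have "\<dots> \<le> 2 / \<delta> * \<epsilon>"
  proof -
    have "sum c (\<rho> ` Q') < \<epsilon>"
      by (rule weight_heavy_representatives_less) (use \<rho> in \<open>auto simp: Q'_def\<close>)
    with \<delta>_pos show ?thesis by (intro mult_left_mono) auto
  qed
  finally show ?thesis .
qed


text \<open>On any part \<open>J\<close> of the combination the averages act jointly as one norming functional,
  a signed sum of them.\<close>
lemma sum_abs_pair_le_weight:
  assumes "J \<subseteq> G"
  shows "(\<Sum>q\<in>Q. \<bar>\<Sum>i\<in>J. c i * pair (a q) (x i)\<bar>) \<le> C * sum c J"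
proof (cases "Q = {}")
  case True
  have "0 \<le> sum c J" using assms c_nonneg by (intro sum_nonneg) auto
  with True C_nonneg show ?thesis by simp
next
  case False
  define S where "S q = (\<Sum>i\<in>J. c i * pair (a q) (x i))" for q
  define f where "f = (\<lambda>i. \<Sum>q\<in>Q. (if 0 \<le> S q then 1 else -1) * a q i)"
  have "f \<in> Wset SF"
    unfolding f_def using Wset_signed_sum[OF vfg finite_Q False Q_admissible] .
  have "(\<Sum>q\<in>Q. \<bar>S q\<bar>) = (\<Sum>q\<in>Q. (if 0 \<le> S q then 1 else -1) * S q)"
    by (rule sum.cong) auto
  also have "\<dots> = (\<Sum>i\<in>J. c i * pair f (x i))"
    unfolding f_def pair_sum_left S_def
    by (simp add: sum_distrib_left mult.left_commute sum.swap[of _ Q])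
  also have "\<dots> \<le> (\<Sum>i\<in>J. c i * C)"
    using assms c_nonneg pair_x_le[OF \<open>f \<in> Wset SF\<close>]
    by (intro sum_mono mult_left_mono) (auto simp: abs_le_iff)
  finally show ?thesis unfolding S_def by (simp add: sum_distrib_left mult.commute)
qed

lemma sum_abs_pair_le_light:
  assumes "i \<in> G" "i \<notin> straddled" and light: "\<And>q. q \<in> Q \<Longrightarrow> real (hits q i) \<le> \<delta> * real (s q)"
  shows "(\<Sum>q\<in>Q. \<bar>pair (a q) (x i)\<bar>) \<le> C * \<delta>"
proof (cases "\<exists>q0\<in>Q. meets q0 i")
  case True
  then obtain q0 where q0: "q0 \<in> Q" "meets q0 i" by blast
  have "(\<Sum>q\<in>Q. \<bar>pair (a q) (x i)\<bar>) = (\<Sum>q\<in>{q0}. \<bar>pair (a q) (x i)\<bar>)"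
  proof (rule sum.mono_neutral_right)
    show "\<forall>q\<in>Q - {q0}. \<bar>pair (a q) (x i)\<bar> = 0"
    proof
      fix q assume "q \<in> Q - {q0}"
      then have "\<not> meets q i" using meets_unique[OF assms(2,1) _ q0(1) _ q0(2)] by blast
      then show "\<bar>pair (a q) (x i)\<bar> = 0" using pair_eq_0_if_disjoint unfolding meets_def by simp
    qed
  qed (use finite_Q q0 in auto)
  also have "\<dots> \<le> C * (real (hits q0 i) / real (s q0))"
    using abs_pair_a_x_le[of q0 i] by simp
  also have "\<dots> \<le> C * \<delta>"
    using light[OF q0(1)] s_ge_2[of q0] C_nonneg
    by (intro mult_left_mono) (simp_all add: divide_le_eq)
  finally show ?thesis .
next
  case False
  then have "pair (a q) (x i) = 0" if "q \<in> Q" for q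
    using that pair_eq_0_if_disjoint unfolding meets_def by blast
  then show ?thesis using C_nonneg \<delta>_pos by simp
qed

lemma sum_abs_pair_light_part_le:
  defines "R \<equiv> G - straddled - (\<Union>q\<in>Q. heavy q)"
  shows "(\<Sum>q\<in>Q. \<bar>\<Sum>i\<in>R. c i * pair (a q) (x i)\<bar>) \<le> C * \<delta>"
proof -
  have R: "R \<subseteq> G" unfolding R_def by blast
  have "(\<Sum>q\<in>Q. \<bar>\<Sum>i\<in>R. c i * pair (a q) (x i)\<bar>) \<le> (\<Sum>q\<in>Q. \<Sum>i\<in>R. c i * \<bar>pair (a q) (x i)\<bar>)"
    using R c_nonneg by (intro sum_mono order.trans[OF sum_abs]) (auto simp: abs_mult)
  also have "\<dots> = (\<Sum>i\<in>R. c i * (\<Sum>q\<in>Q. \<bar>pair (a q) (x i)\<bar>))"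
    by (simp add: sum_distrib_left sum.swap[of _ Q])
  also have "\<dots> \<le> (\<Sum>i\<in>R. c i * (C * \<delta>))"
  proof (intro sum_mono mult_left_mono)
    fix i assume "i \<in> R"
    then show "(\<Sum>q\<in>Q. \<bar>pair (a q) (x i)\<bar>) \<le> C * \<delta>" "0 \<le> c i"
      using R c_nonneg unfolding R_def heavy_def
      by (auto intro!: sum_abs_pair_le_light simp: not_less)
  qed
  also have "\<dots> = C * \<delta> * sum c R" by (simp add: sum_distrib_left mult.commute)
  also have "\<dots> \<le> C * \<delta> * 1"
  proof (intro mult_left_mono)
    have "sum c R \<le> sum c G" using c_nonneg R finite_G by (intro sum_mono2) auto
    with sum_c_le show "sum c R \<le> 1" by linarith
  qed (use C_nonneg \<delta>_pos in simp)
  finally show ?thesis by simp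
qed

text \<open>The straddled and the heavy vectors carry weight \<open>O(\<epsilon>)\<close>; each remaining (light) vector
  meets at most one average, in at most \<open>\<delta> * s q\<close> of its summands.\<close>
lemma sum_abs_pair_combination_le:
  "(\<Sum>q\<in>Q. \<bar>\<Sum>i\<in>G. c i * pair (a q) (x i)\<bar>) \<le> C * (2 + 2 / \<delta>) * \<epsilon> + C * \<delta>"
proof -
  define H where "H = (\<Union>q\<in>Q. heavy q)"
  define R where "R = G - straddled - H"
  define P where "P q i = c i * pair (a q) (x i)" for q i
  have sub: "straddled \<subseteq> G" "H \<subseteq> G - straddled"
    unfolding straddled_def H_def heavy_def by auto
  have split: "(\<Sum>i\<in>G. P q i) = (\<Sum>i\<in>straddled. P q i) + (\<Sum>i\<in>H. P q i) + (\<Sum>i\<in>R. P q i)" for q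
  proof -
    have "(\<Sum>i\<in>G. P q i) = (\<Sum>i\<in>G - straddled. P q i) + (\<Sum>i\<in>straddled. P q i)"
      using sum.subset_diff[OF sub(1) finite_G] by simp
    moreover have "(\<Sum>i\<in>G - straddled. P q i) = (\<Sum>i\<in>R. P q i) + (\<Sum>i\<in>H. P q i)"
      unfolding R_def using sum.subset_diff[OF sub(2)] finite_G by simp
    ultimately show ?thesis by simp
  qed
  have "(\<Sum>q\<in>Q. \<bar>\<Sum>i\<in>G. P q i\<bar>)
      \<le> (\<Sum>q\<in>Q. \<bar>\<Sum>i\<in>straddled. P q i\<bar>) + (\<Sum>q\<in>Q. \<bar>\<Sum>i\<in>H. P q i\<bar>) + (\<Sum>q\<in>Q. \<bar>\<Sum>i\<in>R. P q i\<bar>)"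
    unfolding split sum.distrib[symmetric] by (intro sum_mono) linarith
  also have "\<dots> \<le> C * sum c straddled + C * sum c H + C * \<delta>"
    using sum_abs_pair_le_weight sub sum_abs_pair_light_part_le
    unfolding P_def R_def H_def by (intro add_mono) auto
  also have "\<dots> \<le> C * (2 * \<epsilon>) + C * (2 / \<delta> * \<epsilon>) + C * \<delta>"
    using weight_straddled_le weight_heavy_le C_nonneg unfolding H_def
    by (intro add_mono mult_left_mono) auto
  finally show ?thesis unfolding P_def by (simp add: algebra_simps)
qed

end

section \<open>Special convex combinations and the limit\<close>

lemma blockseq_Min_supp_less:
  assumes "blockseq x" "i < i'"
  shows "Min (supp (x i)) < Min (supp (x i'))"
proof -
  have x: "finite (supp (x k))" "supp (x k) \<noteq> {}" for k
    using assms(1) unfolding blockseq_def by auto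
  have "setless (supp (x i)) (supp (x i'))"
    using assms(1) x(2) by (intro setless_chain[OF _ _ assms(2)]) (auto simp: blockseq_def)
  with x show ?thesis unfolding setless_def by (meson Min_in)
qed

text \<open>In \<open>scc\<close> the coefficients are transported to the minima of the supports; since these minima
  are distinct, the transported weight of \<open>I \<subseteq> F\<close> is just \<open>sum c I\<close>.\<close>
lemma sum_transported_weights:
  assumes "blockseq x" "I \<subseteq> F"
  shows "(\<Sum>p\<in>(\<lambda>i. Min (supp (x i))) ` I. \<Sum>k\<in>{k\<in>F. Min (supp (x k)) = p}. c k) = sum c I"
proof -
  have "strict_mono (\<lambda>i. Min (supp (x i)))"
    using blockseq_Min_supp_less[OF assms(1)] by (rule strict_monoI)
  then have inj: "inj_on (\<lambda>i. Min (supp (x i))) A" for A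
    by (rule strict_mono_imp_inj_on)
  have "{k\<in>F. Min (supp (x k)) = Min (supp (x i))} = {i}" if "i \<in> I" for i
    using that assms(2) inj[of UNIV] unfolding inj_on_def by auto
  then show ?thesis by (simp add: sum.reindex[OF inj])
qed

lemma scc_weight_less:
  assumes "scc S\<eta> S\<zeta> \<epsilon> x F c" "blockseq x" "I \<subseteq> F" "(\<lambda>i. Min (supp (x i))) ` I \<in> S\<zeta>"
  shows "sum c I < \<epsilon>"
proof -
  define \<phi> where "\<phi> i = Min (supp (x i))" for i
  define w where "w p = (\<Sum>k\<in>{k\<in>F. \<phi> k = p}. c k)" for p
  have "sum w (\<phi> ` I \<inter> \<phi> ` F) < \<epsilon>"
    using assms(1,4) unfolding scc_def basic_scc_def \<phi>_def[abs_def] w_def by blast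
  moreover have "\<phi> ` I \<inter> \<phi> ` F = \<phi> ` I" using assms(3) by blast
  ultimately show ?thesis
    using sum_transported_weights[OF assms(2,3), of c] unfolding \<phi>_def[abs_def] w_def by simp
qed

lemma scc_sum_eq_1:
  assumes "scc S\<eta> S\<zeta> \<epsilon> x F c" "blockseq x"
  shows "sum c F = 1"
  using assms sum_transported_weights[OF assms(2), of F F c] unfolding scc_def basic_scc_def by simp

lemma sum_abs_pair_scc_le:
  assumes "blockseq x" "\<And>k f. f \<in> Wset SF \<Longrightarrow> \<bar>pair f (x k)\<bar> \<le> C"
    and "vfg (Wset SF) a s" "finite Q"
    and "(\<lambda>q. Min (supp (a q))) ` Q \<in> schreier \<zeta>" "(\<lambda>q. Min (supp (a q))) ` Q \<in> SF"
    and "scc S\<eta> S\<zeta> \<epsilon> x F c" "finite F" "schreier \<zeta> \<subseteq> S\<zeta>"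
    and "0 < \<delta>" "\<And>q. q \<in> Q \<Longrightarrow> 1 \<le> \<delta> * real (s q)"
  shows "(\<Sum>q\<in>Q. \<bar>pair (a q) (\<lambda>p. \<Sum>i\<in>F. c i * x i p)\<bar>) \<le> C * (2 + 2 / \<delta>) * \<epsilon> + C * \<delta>"
proof -
  interpret pairing_estimate SF x C a s Q F c \<zeta> \<epsilon> \<delta>
  proof (rule pairing_estimate.intro)
    show "\<And>i. i \<in> F \<Longrightarrow> 0 \<le> c i" using assms(7) unfolding scc_def by blast
    show "sum c F \<le> 1" using scc_sum_eq_1[OF assms(7,1)] by simp
    show "sum c I < \<epsilon>" if "I \<subseteq> F" "(\<lambda>i. Min (supp (x i))) ` I \<in> schreier \<zeta>" for I
      using scc_weight_less[OF assms(7,1) that(1)] that(2) assms(9) by blast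
  qed (fact assms)+
  have "pair (a q) (\<lambda>p. \<Sum>i\<in>F. c i * x i p) = (\<Sum>i\<in>F. c i * pair (a q) (x i))" for q
    using assms(8) x_finite by (intro pair_sum_right) auto
  then show ?thesis using sum_abs_pair_combination_le by simp
qed

lemma vfg_index_le_Min_supp:
  assumes "vfg (Wset SF) a s"
  shows "q \<le> Min (supp (a q))"
proof (induction q)
  case (Suc q)
  have "finite (supp (a k)) \<and> supp (a k) \<noteq> {}" for k
    using Wset_bounded_finite_supp[OF vfg_Wset[OF assms]] by blast
  then have "Min (supp (a q)) < Min (supp (a (Suc q)))"
    using vfg_blk[OF assms lessI] unfolding blk_def setless_def by (meson Min_in)
  with Suc show ?case by simp
qed simp

lemma schreier_OL_intro:
  assumes "E \<in> schreier (f n)" "\<And>p. p \<in> E \<Longrightarrow> n < p"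
  shows "E \<in> schreier (OL f)"
proof -
  have "E = {} \<or> Suc n \<le> Min E"
    using assms schreier_finite[OF assms(1)] by (metis Min_in Suc_leI)
  with assms(1) show ?thesis by auto
qed

lemma eventually_successive_sets_ge:
  assumes "\<And>k l. k < l \<Longrightarrow> setless (F k) (F l)"
  shows "eventually (\<lambda>k. \<forall>q\<in>F k. N \<le> q) sequentially"
proof -
  have "{k. q \<in> F k} \<subseteq> {LEAST k. q \<in> F k}" for q
  proof
    fix k assume k: "k \<in> {k. q \<in> F k}"
    have "\<not> k' < k" if "q \<in> F k'" for k'
      using that k assms[of k' k] unfolding setless_def by auto
    with k have "(LEAST k. q \<in> F k) = k" by (intro Least_equality) (auto simp: not_less)
    then show "k \<in> {LEAST k. q \<in> F k}" by simp
  qed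
  then have "finite (\<Union>q<N. {k. q \<in> F k})" by (auto intro: finite_subset)
  moreover have "{k. \<not> (\<forall>q\<in>F k. N \<le> q)} \<subseteq> (\<Union>q<N. {k. q \<in> F k})" by force
  ultimately show ?thesis
    unfolding cofinite_eq_sequentially[symmetric] eventually_cofinite by (rule finite_subset[rotated])
qed

lemma tendsto_0_if_eventually_le:
  fixes u e :: "nat \<Rightarrow> real"
  assumes "\<And>k. 0 \<le> u k" "e \<longlonglongrightarrow> 0" "0 \<le> C"
    and bound: "\<And>\<delta>. 0 < \<delta> \<Longrightarrow> eventually (\<lambda>k. u k \<le> K \<delta> * e k + C * \<delta>) sequentially"
  shows "u \<longlonglongrightarrow> 0"
proof (rule order_tendstoI)
  fix r :: real assume "0 < r"
  define \<delta> where "\<delta> = r / (2 * (C + 1))"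
  have \<delta>: "0 < \<delta>" "C * \<delta> < r / 2"
    using \<open>0 < r\<close> assms(3) unfolding \<delta>_def by (auto simp: field_simps)
  have "eventually (\<lambda>k. K \<delta> * e k < r / 2) sequentially"
    by (rule order_tendstoD(2)[OF tendsto_mult_right_zero[OF assms(2)]]) (use \<open>0 < r\<close> in simp)
  with bound[OF \<delta>(1)] show "eventually (\<lambda>k. u k < r) sequentially"
    by eventually_elim (use \<delta>(2) in linarith)
next
  fix r :: real assume "r < 0"
  with assms(1) show "eventually (\<lambda>k. r < u k) sequentially"
    by (auto intro: always_eventually less_le_trans)
qed

lemma eventually_sum_abs_pair_scc_le:
  assumes valid: "valid (OL xs)" and x: "blockseq x"
    and C: "\<And>k f. f \<in> Wset (schreier (OL xs)) \<Longrightarrow> \<bar>pair f (x k)\<bar> \<le> C"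
    and F: "\<And>k. finite (F k)"
    and scc: "\<And>k. scc (schreier (xs (Suc k))) (schreier (xs k)) (\<epsilon> k) x (F k) c"
    and vfg: "vfg (Wset (schreier (OL xs))) a s"
    and Fa: "\<And>k l. k < l \<Longrightarrow> setless (Fa k) (Fa l)" "\<And>k. finite (Fa k)"
    and Fa_schreier: "\<And>k. (\<lambda>q. Min (supp (a q))) ` Fa k \<in> schreier (xs n)"
    and mm: "strict_mono mm" and "0 < \<delta>"
  shows "eventually (\<lambda>k. (\<Sum>q\<in>Fa k. \<bar>pair (a q) (\<lambda>p. \<Sum>i\<in>F (mm k). c i * x i p)\<bar>)
    \<le> C * (2 + 2 / \<delta>) * \<epsilon> (mm k) + C * \<delta>) sequentially"
proof -
  define N where "N = Suc n + nat \<lceil>1 / \<delta>\<rceil>"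
  have "eventually (\<lambda>k. \<forall>q\<in>Fa k. N \<le> q) sequentially"
    using Fa(1) by (rule eventually_successive_sets_ge)
  with eventually_ge_at_top[of n] show ?thesis
  proof eventually_elim
    case (elim k)
    have "n < Min (supp (a q))" if "q \<in> Fa k" for q
    proof -
      have "N \<le> q" using elim that by blast
      then show ?thesis using vfg_index_le_Min_supp[OF vfg, of q] unfolding N_def by linarith
    qed
    then have "(\<lambda>q. Min (supp (a q))) ` Fa k \<in> schreier (OL xs)"
      by (intro schreier_OL_intro[where f = xs and n = n, OF Fa_schreier]) blast
    moreover have "schreier (xs n) \<subseteq> schreier (xs (mm k))"
      using schreier_mono_valid[OF valid] elim seq_suble[OF mm, of k] by simp
    moreover have "1 \<le> \<delta> * real (s q)" if "q \<in> Fa k" for q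
    proof -
      have "N \<le> q" using elim that by blast
      then have "nat \<lceil>1 / \<delta>\<rceil> \<le> q" unfolding N_def by linarith
      then have "1 / \<delta> \<le> real q" using real_nat_ceiling_ge[of "1 / \<delta>"] by linarith
      also have "\<dots> \<le> real (s q)" using seq_suble vfg unfolding vfg_def by simp
      finally show ?thesis using \<open>0 < \<delta>\<close> by (simp add: field_simps)
    qed
    ultimately show ?case
      using sum_abs_pair_scc_le[OF x C vfg Fa(2) Fa_schreier _ scc F] \<open>0 < \<delta>\<close> by blast
  qed
qed

text \<open>The argument only uses that the Schreier families of the \<open>\<xi>\<^sub>n\<close> increase, not that their
  limit is \<open>\<omega>\<^sup>\<xi>\<close>; nor does it need \<open>\<epsilon> k > 0\<close> or that the \<open>F k\<close> are successive.\<close>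
theorem corollary1:
  fixes \<xi> :: ord and xs :: "nat \<Rightarrow> ord"
    and x y :: "nat \<Rightarrow> nat \<Rightarrow> real" and F :: "nat \<Rightarrow> nat set"
    and c :: "nat \<Rightarrow> real" and \<epsilon> :: "nat \<Rightarrow> real"
  assumes "ole (OS OZ) \<xi>"
    and "valid (OL xs)"
    and "oeq (OL xs) (oexpw \<xi>)"
    and "blockseq x"
    and "\<exists>C. \<forall>k. xnorm (Wset (schreier (OL xs))) (x k) \<le> C"
    and "\<forall>k. finite (F k) \<and> F k \<noteq> {}"
    and "\<forall>k. setless (F k) (F (Suc k))"
    and "\<forall>k. y k = (\<lambda>j. \<Sum>i\<in>F k. c i * x i j)"
    and "\<forall>k. scc (schreier (xs (Suc k))) (schreier (xs k)) (\<epsilon> k) x (F k) c"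
    and "\<forall>k. \<epsilon> k > 0"
    and "\<epsilon> \<longlonglongrightarrow> 0"
  shows "alpha_index_zero (Wset (schreier (OL xs))) xs y"
  unfolding alpha_index_zero_def
proof (intro allI impI, elim conjE)
  fix n :: nat and a :: "nat \<Rightarrow> nat \<Rightarrow> real" and s :: "nat \<Rightarrow> nat"
    and Fa :: "nat \<Rightarrow> nat set" and mm :: "nat \<Rightarrow> nat"
  assume vfg: "vfg (Wset (schreier (OL xs))) a s" and "\<forall>k. finite (Fa k)"
    "\<forall>k l. k < l \<longrightarrow> setless (Fa k) (Fa l)" "\<forall>k. (\<lambda>q. Min (supp (a q))) ` Fa k \<in> schreier (xs n)"
    and mm: "strict_mono mm"
  then have Fa: "\<And>k l. k < l \<Longrightarrow> setless (Fa k) (Fa l)" "\<And>k. finite (Fa k)"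
    "\<And>k. (\<lambda>q. Min (supp (a q))) ` Fa k \<in> schreier (xs n)" by auto
  obtain C where C: "\<And>k f. f \<in> Wset (schreier (OL xs)) \<Longrightarrow> \<bar>pair f (x k)\<bar> \<le> C"
    using assms(5) abs_pair_le_xnorm order_trans by metis
  have "0 \<le> C" using C[OF Wset.unit[of 1 1], of 0] by simp
  show "(\<lambda>k. \<Sum>q\<in>Fa k. \<bar>pair (a q) (y (mm k))\<bar>) \<longlonglongrightarrow> 0"
  proof (rule tendsto_0_if_eventually_le)
    show "(\<lambda>k. \<epsilon> (mm k)) \<longlonglongrightarrow> 0" using LIMSEQ_subseq_LIMSEQ[OF assms(11) mm] by (simp add: comp_def)
    show "eventually (\<lambda>k. (\<Sum>q\<in>Fa k. \<bar>pair (a q) (y (mm k))\<bar>)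
        \<le> C * (2 + 2 / \<delta>) * \<epsilon> (mm k) + C * \<delta>) sequentially" if "0 < \<delta>" for \<delta>
      unfolding assms(8)[rule_format]
      by (rule eventually_sum_abs_pair_scc_le[OF assms(2,4) C]) (use assms(6,9) vfg Fa mm that in auto)
  qed (use \<open>0 \<le> C\<close> in auto)
qed

end
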